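(* Let $G$ be a finite simple graph on $[n]$, $w:E(G)\to\mathbb Z_{>0}$ a weight function, $\Bbbk$ a field, $S=\Bbbk[x_1,\ldots,x_n]$ and $I(G_w)=\big((x_ix_j)^{w(i,j)}\mid\{i,j\}\in E(G)\big)$. Assume $J=\sqrt{I(G_w):x^{\mathbf a}}$ is an associated radical of $I(G_w)$ and $K$ is an associated radical of $J$. Then $K$ is also an associated radical of $I(G_w)$.
   Context: For a monomial ideal $I$, an associated radical of $I$ is an ideal of the form $\sqrt{I:f}$ with $f$ a monomial not in $I$. *)

theory Defs
  imports "HOL-Library.Poly_Mapping"
begin

text \<open>With 'v a finite type with n elements and 'k a field this is k[x_1,...,x_n].\<close>
type_synonym ('v, 'k) mpoly = "('v \<Rightarrow>\<^sub>0 nat) \<Rightarrow>\<^sub>0 'k"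

definition monom :: "('v \<Rightarrow>\<^sub>0 nat) \<Rightarrow> ('v, 'k::comm_ring_1) mpoly" where
  "monom a = Poly_Mapping.single a 1"

definition ideal_gen :: "('v, 'k::comm_ring_1) mpoly set \<Rightarrow> ('v, 'k) mpoly set" where
  "ideal_gen G = {p. \<exists>F r. finite F \<and> F \<subseteq> G \<and> p = (\<Sum>g\<in>F. r g * g)}"

definition colon :: "('v, 'k::comm_ring_1) mpoly set \<Rightarrow> ('v, 'k) mpoly \<Rightarrow> ('v, 'k) mpoly set" where
  "colon I f = {g. g * f \<in> I}"

definition radical :: "('v, 'k::comm_ring_1) mpoly set \<Rightarrow> ('v, 'k) mpoly set" where
  "radical I = {g. \<exists>m::nat. g ^ m \<in> I}"

definition assoc_radical :: "('v, 'k::comm_ring_1) mpoly set \<Rightarrow> ('v, 'k) mpoly set \<Rightarrow> bool" where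
  "assoc_radical I K \<longleftrightarrow> (\<exists>a. monom a \<notin> I \<and> K = radical (colon I (monom a)))"

definition weighted_edge_ideal ::
  "('v \<Rightarrow> 'v \<Rightarrow> bool) \<Rightarrow> ('v \<Rightarrow> 'v \<Rightarrow> nat) \<Rightarrow> ('v, 'k::comm_ring_1) mpoly set" where
  "weighted_edge_ideal E w =
     ideal_gen {monom (Poly_Mapping.single i (w i j) + Poly_Mapping.single j (w i j)) | i j. E i j}"

end

theory Submission
  imports Defs HOL.Modules
begin

text \<open>Membership of a polynomial in a monomial ideal I is decided term by term, and a term
  lies in I iff some generator divides it. If every generator has all exponents at most D
  and N > D, then multiplying by x^(N b) is at least as good as multiplying by any power of
  x^b, since in every variable occurring in x^b the exponent already exceeds those of all
  generators. Hence, with c = a + N b, both sqrt(sqrt(I : x^a) : x^b) and sqrt(I : x^c) consist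
  of the f with f^m x^a x^(l b) in I for some m and l.\<close>

lemma module_times: "module ((*) :: 'a::comm_ring_1 \<Rightarrow> 'a \<Rightarrow> 'a)"
  by standard (simp_all add: algebra_simps)

lemma ideal_gen_eq_span: "ideal_gen G = module.span (*) G"
  unfolding ideal_gen_def module.span_explicit[OF module_times] by blast

lemma ideal_gen_mult: "p \<in> ideal_gen G \<Longrightarrow> q * p \<in> ideal_gen G"
  unfolding ideal_gen_eq_span by (rule module.span_scale[OF module_times])

lemma ideal_gen_base: "p \<in> G \<Longrightarrow> p \<in> ideal_gen G"
  unfolding ideal_gen_eq_span by (rule module.span_base[OF module_times])

lemma ideal_gen_sum: "(\<And>x. x \<in> A \<Longrightarrow> f x \<in> ideal_gen G) \<Longrightarrow> sum f A \<in> ideal_gen G"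
  unfolding ideal_gen_eq_span by (rule module.span_sum[OF module_times])

lemma radical_colon_radical_colon:
  fixes I :: "('v, 'k::comm_ring_1) mpoly set"
  assumes I: "I = ideal_gen G" and "N > 0"
    and saturated: "\<And>p l. p * (x * y ^ l) \<in> I \<Longrightarrow> p * (x * y ^ N) \<in> I"
  shows "radical (colon (radical (colon I x)) y) = radical (colon I (x * y ^ N))"
    (is "?L = ?R")
proof (rule set_eqI)
  fix f
  have "f \<in> ?L \<longleftrightarrow> (\<exists>m l. (f ^ m * y) ^ l * x \<in> I)"
    unfolding radical_def colon_def by simp
  also have "\<dots> \<longleftrightarrow> (\<exists>m. f ^ m * (x * y ^ N) \<in> I)"
  proof
    assume "\<exists>m l. (f ^ m * y) ^ l * x \<in> I"
    then obtain m l where "(f ^ m * y) ^ l * x \<in> I" by blast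
    then have "(f ^ m) ^ l * (x * y ^ l) \<in> I"
      by (simp add: power_mult_distrib mult_ac)
    then have "f ^ (m * l) * (x * y ^ l) \<in> I"
      by (simp only: power_mult)
    then show "\<exists>m. f ^ m * (x * y ^ N) \<in> I"
      using saturated by blast
  next
    assume "\<exists>m. f ^ m * (x * y ^ N) \<in> I"
    then obtain m where m: "f ^ m * (x * y ^ N) \<in> I" ..
    obtain n where N: "N = Suc n" using \<open>N > 0\<close> gr0_implies_Suc by blast
    have "(f ^ m * y) ^ N * x = (f ^ m) ^ n * (f ^ m * (x * y ^ N))"
      unfolding N by (simp add: power_mult_distrib mult_ac)
    also have "\<dots> \<in> I" using m unfolding I by (rule ideal_gen_mult)
    finally show "\<exists>m l. (f ^ m * y) ^ l * x \<in> I" by blast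
  qed
  also have "\<dots> \<longleftrightarrow> f \<in> ?R"
    unfolding radical_def colon_def by simp
  finally show "f \<in> ?L \<longleftrightarrow> f \<in> ?R" .
qed

lemma monom_add: "monom (s + t) = (monom s * monom t :: ('v, 'k::comm_ring_1) mpoly)"
  by (simp add: monom_def mult_single)

lemma monom_power: "monom s ^ n = (monom (\<Sum>_<n. s) :: ('v, 'k::comm_ring_1) mpoly)"
  by (induction n) (simp_all add: monom_def one_poly_mapping_def mult_single add.commute)

lemma mpoly_monom_expansion:
  "p = (\<Sum>s\<in>Poly_Mapping.keys p. Poly_Mapping.single 0 (Poly_Mapping.lookup p s) * monom s)"
  (is "p = ?expansion")
proof (rule poly_mapping_eqI)
  fix t :: "'a \<Rightarrow>\<^sub>0 nat"
  have "Poly_Mapping.lookup ?expansion t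
      = (\<Sum>s\<in>Poly_Mapping.keys p. if s = t then Poly_Mapping.lookup p s else 0)"
    by (simp add: lookup_sum monom_def mult_single lookup_single when_def)
  also have "\<dots> = Poly_Mapping.lookup p t" by (simp add: in_keys_iff)
  finally show "Poly_Mapping.lookup p t = Poly_Mapping.lookup ?expansion t" ..
qed

lemma keys_mult_monom: "s \<in> Poly_Mapping.keys (p * monom u) \<Longrightarrow> \<exists>t. s = t + u"
  using keys_mult[of p "monom u"] by (auto simp: monom_def)

lemma lookup_mult_monom:
  "Poly_Mapping.lookup (p * monom u) (t + u) = (Poly_Mapping.lookup p t :: 'k::comm_ring_1)"
proof -
  have "Poly_Mapping.lookup (p * monom u) (t + u)
      = (\<Sum>s\<in>Poly_Mapping.keys p. if s = t then Poly_Mapping.lookup p s else 0)"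
    by (subst mpoly_monom_expansion[of p])
      (simp add: sum_distrib_right monom_def mult_single lookup_sum lookup_single when_def)
  also have "\<dots> = Poly_Mapping.lookup p t" by (simp add: in_keys_iff)
  finally show ?thesis .
qed

definition exp_dvd :: "('v \<Rightarrow>\<^sub>0 nat) \<Rightarrow> ('v \<Rightarrow>\<^sub>0 nat) \<Rightarrow> bool" where
  "exp_dvd g s \<longleftrightarrow> (\<forall>k. Poly_Mapping.lookup g k \<le> Poly_Mapping.lookup s k)"

lemma ideal_gen_of_keys:
  assumes "\<And>s. s \<in> Poly_Mapping.keys p \<Longrightarrow> monom s \<in> ideal_gen G"
  shows "(p :: ('v, 'k::comm_ring_1) mpoly) \<in> ideal_gen G"
  using assms by (subst mpoly_monom_expansion) (intro ideal_gen_sum ideal_gen_mult)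

lemma exp_dvd_of_keys_monomial_ideal:
  assumes "p \<in> ideal_gen (monom ` Gs :: ('v, 'k::comm_ring_1) mpoly set)"
    and "s \<in> Poly_Mapping.keys p"
  shows "\<exists>g\<in>Gs. exp_dvd g s"
proof -
  obtain F r where F: "finite F" "F \<subseteq> monom ` Gs" "p = (\<Sum>h\<in>F. r h * h)"
    using assms(1) unfolding ideal_gen_def by blast
  then obtain h where h: "h \<in> F" "s \<in> Poly_Mapping.keys (r h * h)"
    using assms(2) keys_sum[of "\<lambda>h. r h * h" F] by blast
  then obtain g where g: "g \<in> Gs" "h = monom g" using F(2) by blast
  then obtain t where "s = t + g" using keys_mult_monom h(2) by blast
  then have "exp_dvd g s" by (simp add: exp_dvd_def lookup_add)
  then show ?thesis using g(1) by blast
qed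

lemma monom_in_monomial_ideal:
  assumes "g \<in> Gs" "exp_dvd g s"
  shows "monom s \<in> ideal_gen (monom ` Gs :: ('v, 'k::comm_ring_1) mpoly set)"
proof -
  have "s = (s - g) + g"
    using assms(2) by (intro poly_mapping_eqI) (simp add: exp_dvd_def lookup_add lookup_minus)
  then have "monom s = monom (s - g) * (monom g :: ('v, 'k) mpoly)"
    by (metis monom_add)
  also have "\<dots> \<in> ideal_gen (monom ` Gs)"
    using assms(1) by (intro ideal_gen_mult ideal_gen_base) simp
  finally show ?thesis .
qed

lemma mult_monom_in_monomial_ideal_bounded:
  assumes "p * monom u \<in> ideal_gen (monom ` Gs :: ('v, 'k::comm_ring_1) mpoly set)"
    and bounded: "\<And>g k. g \<in> Gs \<Longrightarrow> Poly_Mapping.lookup g k \<le> D"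
    and uv: "\<And>k. Poly_Mapping.lookup u k \<le> Poly_Mapping.lookup v k \<or> D \<le> Poly_Mapping.lookup v k"
  shows "p * monom v \<in> ideal_gen (monom ` Gs)"
proof (rule ideal_gen_of_keys)
  fix s assume s: "s \<in> Poly_Mapping.keys (p * monom v)"
  then obtain t where t: "s = t + v" using keys_mult_monom by blast
  have "t + u \<in> Poly_Mapping.keys (p * monom u)"
    using s unfolding t in_keys_iff lookup_mult_monom .
  then obtain g where g: "g \<in> Gs" "exp_dvd g (t + u)"
    using exp_dvd_of_keys_monomial_ideal assms(1) by blast
  have "exp_dvd g s"
    unfolding exp_dvd_def
  proof
    fix k
    show "Poly_Mapping.lookup g k \<le> Poly_Mapping.lookup s k"
      using uv[of k] g bounded[of g k] unfolding t exp_dvd_def lookup_add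
      by (metis add_le_mono le_add2 le_refl order_trans)
  qed
  then show "monom s \<in> ideal_gen (monom ` Gs)"
    using monom_in_monomial_ideal g(1) by blast
qed

lemma finite_exponents_bounded:
  "finite Gs \<Longrightarrow> \<exists>D. \<forall>g\<in>Gs. \<forall>k. Poly_Mapping.lookup g k \<le> (D :: nat)"
proof (induction Gs rule: finite_induct)
  case empty
  then show ?case by simp
next
  case (insert g Gs)
  then obtain D where D: "\<forall>g\<in>Gs. \<forall>k. Poly_Mapping.lookup g k \<le> D" by blast
  have "Poly_Mapping.lookup g k \<le> sum (Poly_Mapping.lookup g) (Poly_Mapping.keys g)" for k
    by (cases "k \<in> Poly_Mapping.keys g") (simp_all add: member_le_sum in_keys_iff)
  then show ?case using D by (metis insert_iff max.cobounded1 max.cobounded2 order_trans)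
qed

theorem assoc_radical_of_assoc_radical_monomial:
  fixes Gs :: "('v \<Rightarrow>\<^sub>0 nat) set"
  defines "I \<equiv> ideal_gen (monom ` Gs) :: ('v, 'k::comm_ring_1) mpoly set"
  assumes "finite Gs" and K: "assoc_radical (radical (colon I (monom a))) K"
  shows "assoc_radical I K"
proof -
  obtain D where D: "\<And>g k. g \<in> Gs \<Longrightarrow> Poly_Mapping.lookup g k \<le> D"
    using finite_exponents_bounded[OF \<open>finite Gs\<close>] by blast
  obtain b where b: "monom b \<notin> radical (colon I (monom a))"
    and K_eq: "K = radical (colon (radical (colon I (monom a))) (monom b))"
    using K unfolding assoc_radical_def by blast
  define N where "N = Suc D"
  define c where "c = a + (\<Sum>_<N. b)"
  have c: "monom c = monom a * monom b ^ N"
    unfolding c_def monom_power monom_add ..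
  have exponents: "Poly_Mapping.lookup (a + (\<Sum>_<l. b)) k \<le> Poly_Mapping.lookup c k
      \<or> D \<le> Poly_Mapping.lookup c k" for l k
  proof (cases "Poly_Mapping.lookup b k = 0")
    case False
    then have "N \<le> N * Poly_Mapping.lookup b k" by simp
    then show ?thesis by (simp add: c_def N_def lookup_add lookup_sum)
  qed (simp add: c_def lookup_add lookup_sum)
  have saturated: "p * monom c \<in> I" if "p * (monom a * monom b ^ l) \<in> I" for p l
    using that unfolding I_def monom_power monom_add[symmetric]
    by (rule mult_monom_in_monomial_ideal_bounded[OF _ D exponents])
  have "monom c \<notin> I"
  proof
    assume "monom c \<in> I"
    then have "monom b ^ N * monom a \<in> I" unfolding c by (simp add: mult.commute)
    then show False using b unfolding radical_def colon_def by blast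
  qed
  moreover have "K = radical (colon I (monom c))"
    unfolding K_eq c
    by (rule radical_colon_radical_colon[OF I_def[THEN meta_eq_to_obj_eq] _ saturated[unfolded c]])
      (simp add: N_def)
  ultimately show ?thesis
    unfolding assoc_radical_def by blast
qed

theorem lemma2p14:
  fixes E :: "'v::finite \<Rightarrow> 'v \<Rightarrow> bool"
    and w :: "'v \<Rightarrow> 'v \<Rightarrow> nat"
    and a :: "'v \<Rightarrow>\<^sub>0 nat"
    and K :: "('v, 'k::field) mpoly set"
  assumes E_sym: "\<And>i j. E i j \<Longrightarrow> E j i"
    and E_irrefl: "\<And>i. \<not> E i i"
    and w_sym: "\<And>i j. E i j \<Longrightarrow> w i j = w j i"
    and w_pos: "\<And>i j. E i j \<Longrightarrow> w i j > 0"
    and a_notin: "monom a \<notin> (weighted_edge_ideal E w :: ('v, 'k) mpoly set)"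
    and K_assoc: "assoc_radical (radical (colon (weighted_edge_ideal E w) (monom a))) K"
  shows "assoc_radical (weighted_edge_ideal E w) K"
proof -
  define Gs where "Gs = {Poly_Mapping.single i (w i j) + Poly_Mapping.single j (w i j) | i j. E i j}"
  have I: "weighted_edge_ideal E w = (ideal_gen (monom ` Gs) :: ('v, 'k) mpoly set)"
    unfolding weighted_edge_ideal_def Gs_def by (rule arg_cong[where f = ideal_gen]) blast
  have "Gs \<subseteq> (\<lambda>(i, j). Poly_Mapping.single i (w i j) + Poly_Mapping.single j (w i j)) ` UNIV"
    unfolding Gs_def by auto
  then have "finite Gs" by (rule finite_subset) simp
  then show ?thesis
    using K_assoc unfolding I by (rule assoc_radical_of_assoc_radical_monomial)
qed

end
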